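(* Let $k\ge2$ and $T_1=\sum_{j=1}^{k-1}(16(k-j)-4)$. Let $e_0=v_1^1v_1^2v_1^3$ and, for $i\in[1,T_1]$, let $s\in[1,k-1]$ be the unique integer with $\sum_{j=1}^{s-1}(16(k-j)-4)<i\le\sum_{j=1}^{s}(16(k-j)-4)$, set $\alpha=i-\sum_{j=1}^{s-1}(16(k-j)-4)\in[1,16(k-s)-4]$, and define - $e_i=v_{2s-1}^1v_{2s-1+\alpha}^2v_1^3$ if $\alpha\in[1,4(k-s)]$; - $e_i=v_{6s-4k-1+\alpha}^1v_{4k-2s-1}^2v_1^3$ if $\alpha\in[4(k-s)+1,8(k-s)]$; - $e_i=v_{4k-2s-1}^1v_{12k-10s-1-\alpha}^2v_1^3$ if $\alpha\in[8(k-s)+1,12(k-s)-2]$; - $e_i=v_{16k-14s-3-\alpha}^1v_{2s+1}^2v_1^3$ if $\alpha\in[12(k-s)-1,16(k-s)-4]$. Then the $3$-graph $H_1=\mathcal{E}\cup\mathcal{F}\cup\{e_0\}$, with vertex set $A_1\cup A_2\cup\{v_1^3\}$, is $(e_i)_{i=0}^{T_1}$-sequential.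
   Context: Let $A_1=\{v^1_1,\dots,v^1_{4k-3}\}$, $A_2=\{v^2_1,\dots,v^2_{4k-3}\}$ be disjoint sets and $v_1^3$ a further vertex. Writing $xyz$ for $\{x,y,z\}$, for $i\in[1,k-1]$ let $\mathcal{E}_{1,i}=\{v_{2i-1}^1v_j^2v_{j+1}^2 : j\in[2i-1,4k-2-2i]\}$, $\mathcal{E}_{2,i}=\{v_j^1v_{j+1}^1v_{4k-1-2i}^2 : j\in[2i-1,4k-2-2i]\}$, $\mathcal{E}_{3,i}=\{v_{4k-1-2i}^1v_j^2v_{j+1}^2 : j\in[2i+1,4k-2-2i]\}$, $\mathcal{E}_{4,i}=\{v_j^1v_{j+1}^1v_{2i+1}^2 : j\in[2i+1,4k-2-2i]\}$, and $\mathcal{E}=\bigcup_{i=1}^{k-1}(\mathcal{E}_{1,i}\cup\mathcal{E}_{2,i}\cup\mathcal{E}_{3,i}\cup\mathcal{E}_{4,i})$. Let $\mathcal{F}=\{v_j^lv_{j+1}^lv_1^3 : j\in[1,4k-4],\ l\in\{1,2\}\}$. The $F_3$-bootstrap process ($F_3=K^3_4$) in the complete $3$-graph on a vertex set $V$ started from $G_0$: $G_i=G_{i-1}\cup\{e : e\notin G_{i-1} \text{ a } 3\text{-subset of } V,\ \exists\, w\in V\setminus e \text{ with the other three } 3\text{-subsets of } e\cup\{w\} \text{ in } G_{i-1}\}$; sets in $G_i\setminus G_{i-1}$ are infected at step $i$; $G_0$ is stationary if $G_1=G_0$. Definition: a $3$-graph $H$ on vertex set $V$ is $(e_i)_{i=0}^T$-sequential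 (for $3$-subsets $e_i$ of $V$ with $e_0\in H$) if (i) the process started from $H$ becomes stationary after $T$ steps and infects only $e_i$ at step $i$ for each $i\in[1,T]$; (ii) $H\setminus\{e_0\}$ is stationary; (iii) the process started from $(H\cup\{e_T\})\setminus\{e_0\}$ infects only $e_{T-i}$ at step $i$ for each $i\in[1,T]$. *)

theory Defs
  imports Main
begin

type_synonym vert = "nat \<times> nat"

definition v :: "nat \<Rightarrow> nat \<Rightarrow> vert" where "v l j = (l, j)"

definition boot_step :: "'a set \<Rightarrow> 'a set set \<Rightarrow> 'a set set" where
  "boot_step V G = G \<union> {e. e \<subseteq> V \<and> card e = 3 \<and> e \<notin> G \<and>
      (\<exists>w \<in> V - e. \<forall>f. f \<subseteq> insert w e \<and> card f = 3 \<and> f \<noteq> e \<longrightarrow> f \<in> G)}"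

definition boot :: "'a set \<Rightarrow> 'a set set \<Rightarrow> nat \<Rightarrow> 'a set set" where
  "boot V G0 i = (boot_step V ^^ i) G0"

definition stationary :: "'a set \<Rightarrow> 'a set set \<Rightarrow> bool" where
  "stationary V G \<longleftrightarrow> boot_step V G = G"

definition is_3graph :: "'a set \<Rightarrow> 'a set set \<Rightarrow> bool" where
  "is_3graph V H \<longleftrightarrow> (\<forall>e \<in> H. e \<subseteq> V \<and> card e = 3)"

definition sequential :: "'a set \<Rightarrow> 'a set set \<Rightarrow> (nat \<Rightarrow> 'a set) \<Rightarrow> nat \<Rightarrow> bool" where
  "sequential V H e T \<longleftrightarrow>
     is_3graph V H \<and>
     (\<forall>i \<le> T. e i \<subseteq> V \<and> card (e i) = 3) \<and> e 0 \<in> H \<and>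
     \<comment> \<open>(i)\<close>
     stationary V (boot V H T) \<and>
     (\<forall>i \<in> {1..T}. boot V H i - boot V H (i - 1) = {e i}) \<and>
     \<comment> \<open>(ii)\<close>
     stationary V (H - {e 0}) \<and>
     \<comment> \<open>(iii)\<close>
     (\<forall>i \<in> {1..T}. boot V ((H \<union> {e T}) - {e 0}) i - boot V ((H \<union> {e T}) - {e 0}) (i - 1)
                     = {e (T - i)})"

definition A1 :: "nat \<Rightarrow> vert set" where "A1 k = {v 1 j | j. j \<in> {1..4*k-3}}"
definition A2 :: "nat \<Rightarrow> vert set" where "A2 k = {v 2 j | j. j \<in> {1..4*k-3}}"
definition VH :: "nat \<Rightarrow> vert set" where "VH k = A1 k \<union> A2 k \<union> {v 3 1}"

definition E1 :: "nat \<Rightarrow> nat \<Rightarrow> vert set set" where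
  "E1 k i = {{v 1 (2*i-1), v 2 j, v 2 (j+1)} | j. j \<in> {2*i-1..4*k-2-2*i}}"
definition E2 :: "nat \<Rightarrow> nat \<Rightarrow> vert set set" where
  "E2 k i = {{v 1 j, v 1 (j+1), v 2 (4*k-1-2*i)} | j. j \<in> {2*i-1..4*k-2-2*i}}"
definition E3 :: "nat \<Rightarrow> nat \<Rightarrow> vert set set" where
  "E3 k i = {{v 1 (4*k-1-2*i), v 2 j, v 2 (j+1)} | j. j \<in> {2*i+1..4*k-2-2*i}}"
definition E4 :: "nat \<Rightarrow> nat \<Rightarrow> vert set set" where
  "E4 k i = {{v 1 j, v 1 (j+1), v 2 (2*i+1)} | j. j \<in> {2*i+1..4*k-2-2*i}}"

definition EE :: "nat \<Rightarrow> vert set set" where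
  "EE k = (\<Union>i \<in> {1..k-1}. E1 k i \<union> E2 k i \<union> E3 k i \<union> E4 k i)"

definition FF :: "nat \<Rightarrow> vert set set" where
  "FF k = {{v l j, v l (j+1), v 3 1} | j l. j \<in> {1..4*k-4} \<and> l \<in> {1,2}}"

definition psum :: "nat \<Rightarrow> nat \<Rightarrow> nat" where
  "psum k s = (\<Sum>j = 1..s. 16*(k-j) - 4)"

definition T1 :: "nat \<Rightarrow> nat" where "T1 k = psum k (k-1)"

definition sidx :: "nat \<Rightarrow> nat \<Rightarrow> nat" where
  "sidx k i = (THE s. s \<in> {1..k-1} \<and> psum k (s-1) < i \<and> i \<le> psum k s)"

text \<open>The sequence e_i. Index arithmetic is written so that no natural-number
 subtraction truncates in the relevant range of alpha.\<close>
definition eseq :: "nat \<Rightarrow> nat \<Rightarrow> vert set" where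
  "eseq k i = (if i = 0 then {v 1 1, v 2 1, v 3 1} else
     (let s = sidx k i; \<alpha> = i - psum k (s-1) in
      if \<alpha> \<in> {1..4*(k-s)} then {v 1 (2*s-1), v 2 (2*s-1+\<alpha>), v 3 1}
      else if \<alpha> \<in> {4*(k-s)+1..8*(k-s)} then {v 1 ((6*s+\<alpha>) - (4*k+1)), v 2 (4*k-2*s-1), v 3 1}
      else if \<alpha> \<in> {8*(k-s)+1..12*(k-s)-2} then {v 1 (4*k-2*s-1), v 2 (12*k - (10*s+1+\<alpha>)), v 3 1}
      else {v 1 (16*k - (14*s+3+\<alpha>)), v 2 (2*s+1), v 3 1}))"

definition H1 :: "nat \<Rightarrow> vert set set" where
  "H1 k = EE k \<union> FF k \<union> {eseq k 0}"

end

theory Submission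
  imports Defs
begin

text \<open>
  Identify the triple \<open>v\<^sup>1\<^sub>a v\<^sup>2\<^sub>b v\<^sup>3\<^sub>1\<close> with the cell \<open>(a, b)\<close> of the grid
  \<open>{1..n} \<times> {1..n}\<close>, \<open>n = 4k - 3\<close>. The \<open>e\<^sub>i\<close> are then the cells \<open>p\<^sub>0, \<dots>, p\<^sub>T\<close> of a
  square spiral whose rings lie two apart, so two of its cells are adjacent in the grid only if
  they are consecutive on the spiral. \<open>\<E>\<close> consists of the triples spanned by consecutive cells
  (\<open>v\<^sup>1\<^sub>a v\<^sup>1\<^sub>a\<^sub>' v\<^sup>2\<^sub>b\<close> or \<open>v\<^sup>1\<^sub>a v\<^sup>2\<^sub>b v\<^sup>2\<^sub>b\<^sub>'\<close>), and \<open>\<F>\<close> of the triples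
  \<open>v\<^sup>l\<^sub>j v\<^sup>l\<^sub>j\<^sub>+\<^sub>1 v\<^sup>3\<^sub>1\<close>. Going through the possible \<open>K\<^sup>3\<^sub>4\<close>'s one finds that
  over \<open>\<E> \<union> \<F>\<close> plus the cell triples of a set \<open>C\<close> of spiral cells, one step of the process
  infects exactly the cell triples of the spiral cells next to \<open>C\<close> in the grid. So the
  infection started at either end of the spiral advances by one cell per step, and without a
  cell triple nothing is infected at all.
\<close>

section \<open>Infection along an induced path of grid cells\<close>

lemma three_subsets_of_four:
  assumes "distinct [w, x, y, z]" "f \<subseteq> {w, x, y, z}" "card f = 3" "f \<noteq> {x, y, z}"
  shows "f = {w, y, z} \<or> f = {w, x, z} \<or> f = {w, x, y}"
proof -
  have "card ({w, x, y, z} - f) = 1"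
    using assms(1-3) by (simp add: card_Diff_subset[OF finite_subset])
  then obtain u where u: "{w, x, y, z} - f = {u}" by (rule card_1_singletonE)
  then have "f = {w, x, y, z} - {u}" "u \<in> {w, x, y, z}" using assms(2) by auto
  then show ?thesis using assms(1,4) by (auto simp: insert_Diff_if)
qed

lemma boot_stepE:
  assumes "e \<in> boot_step V G" "e \<notin> G"
  obtains w x y z where "e = {x, y, z}" "distinct [w, x, y, z]"
    "w \<in> V" "x \<in> V" "y \<in> V" "z \<in> V" "{w, y, z} \<in> G" "{w, x, z} \<in> G" "{w, x, y} \<in> G"
proof -
  from assms obtain w where eV: "e \<subseteq> V" and e3: "card e = 3" and wV: "w \<in> V - e"
    and faces: "\<And>f. f \<subseteq> insert w e \<Longrightarrow> card f = 3 \<Longrightarrow> f \<noteq> e \<Longrightarrow> f \<in> G"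
    unfolding boot_step_def by blast
  from e3 obtain x y z where xyz: "e = {x, y, z}" "x \<noteq> y" "y \<noteq> z" "x \<noteq> z"
    unfolding card_3_iff by blast
  have w: "w \<noteq> x" "w \<noteq> y" "w \<noteq> z" using wV xyz by auto
  show ?thesis
  proof (rule that[OF xyz(1)])
    show "distinct [w, x, y, z]" using w xyz(2-4) by simp
    show "w \<in> V" "x \<in> V" "y \<in> V" "z \<in> V" using wV eV xyz(1) by auto
    show "{w, y, z} \<in> G" using faces[of "{w, y, z}"] xyz w by auto
    show "{w, x, z} \<in> G" using faces[of "{w, x, z}"] xyz w by auto
    show "{w, x, y} \<in> G" using faces[of "{w, x, y}"] xyz w by auto
  qed
qed

lemma boot_stepI:
  assumes "distinct [w, x, y, z]" "w \<in> V" "x \<in> V" "y \<in> V" "z \<in> V"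
    "{w, y, z} \<in> G" "{w, x, z} \<in> G" "{w, x, y} \<in> G"
  shows "{x, y, z} \<in> boot_step V G"
proof -
  have "f \<in> G" if "f \<subseteq> {w, x, y, z}" "card f = 3" "f \<noteq> {x, y, z}" for f
    using three_subsets_of_four[OF assms(1) that] assms(6-8) by auto
  moreover have "{x, y, z} \<subseteq> V" "card {x, y, z} = 3" "w \<in> V - {x, y, z}"
    using assms(1-5) by auto
  ultimately show ?thesis unfolding boot_step_def by blast
qed

definition grid_adj :: "'a::{one,plus} \<times> 'a \<Rightarrow> 'a \<times> 'a \<Rightarrow> bool" where
  "grid_adj c d \<longleftrightarrow>
     (fst c = fst d \<and> (snd d = snd c + 1 \<or> snd c = snd d + 1)) \<or>
     (snd c = snd d \<and> (fst d = fst c + 1 \<or> fst c = fst d + 1))"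

lemma grid_adj_commute: "grid_adj c d \<longleftrightarrow> grid_adj d c"
  unfolding grid_adj_def by auto

lemma grid_adj_row: "a' = a + 1 \<or> a = a' + 1 \<Longrightarrow> grid_adj (a, b) (a', b)"
  unfolding grid_adj_def by auto

lemma grid_adj_column: "b' = b + 1 \<or> b = b' + 1 \<Longrightarrow> grid_adj (a, b) (a, b')"
  unfolding grid_adj_def by auto

lemma grid_adj_int: "grid_adj (map_prod int int c) (map_prod int int d) \<longleftrightarrow> grid_adj c d"
  unfolding grid_adj_def by (cases c; cases d) auto

definition grid_vertices :: "nat \<Rightarrow> vert set" where
  "grid_vertices n = {(l, j) | l j. l \<in> {1, 2} \<and> j \<in> {1..n}} \<union> {(3, 1)}"

definition cell_edge :: "nat \<times> nat \<Rightarrow> vert set" where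
  "cell_edge c = {(1, fst c), (2, snd c), (3, 1)}"

definition square_edge :: "nat \<times> nat \<Rightarrow> nat \<times> nat \<Rightarrow> vert set" where
  "square_edge c d = {(1, fst c), (1, fst d), (2, snd c), (2, snd d)}"

definition fan_edges :: "nat \<Rightarrow> vert set set" where
  "fan_edges n = {{(l, j), (l, j + 1), (3, 1)} | l j. l \<in> {1, 2} \<and> 1 \<le> j \<and> j < n}"

definition path_edges :: "(nat \<Rightarrow> nat \<times> nat) \<Rightarrow> nat \<Rightarrow> vert set set" where
  "path_edges p T = {square_edge (p m) (p (m + 1)) | m. m < T}"

lemma grid_vertices_cases:
  assumes "u \<in> grid_vertices n"
  obtains j where "u = (1, j)" "1 \<le> j" "j \<le> n" | j where "u = (2, j)" "1 \<le> j" "j \<le> n"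
    | "u = (3, 1)"
  using assms unfolding grid_vertices_def by auto

definition level :: "nat \<Rightarrow> vert set \<Rightarrow> nat set" where
  "level l X = {j. (l, j) \<in> X}"

lemma level_insert [simp]:
  "level l (insert (l', j) X) = (if l = l' then insert j (level l X) else level l X)"
  unfolding level_def by auto

lemma level_empty [simp]: "level l {} = {}"
  unfolding level_def by auto

lemma levels_eq:
  "X = Y \<Longrightarrow> level 1 X = level 1 Y \<and> level 2 X = level 2 Y \<and> level 3 X = level 3 Y"
  by simp

text \<open>As a simplification rule this sorts literal vertex sets by level, so that membership
  lemmas only need to be stated for sorted triples.\<close>

lemma insert_commute_level:
  "l' < l \<Longrightarrow> insert (l, a) (insert (l', b) X) = insert (l', b) (insert (l, a) X)"
  by (rule insert_commute)

lemma cell_edge_in_image: "{(1, a), (2, b), (3, 1)} \<in> cell_edge ` X \<longleftrightarrow> (a, b) \<in> X"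
proof
  assume "{(1, a), (2, b), (3, 1)} \<in> cell_edge ` X"
  then obtain c where "c \<in> X" "cell_edge c = {(1, a), (2, b), (3, 1)}"
    by (metis imageE)
  then show "(a, b) \<in> X" unfolding cell_edge_def by (cases c) (auto dest!: levels_eq)
next
  assume "(a, b) \<in> X"
  then show "{(1, a), (2, b), (3, 1)} \<in> cell_edge ` X"
    by (rule rev_image_eqI) (simp add: cell_edge_def)
qed

lemma cell_edge_inj: "cell_edge c = cell_edge d \<Longrightarrow> c = d"
  unfolding cell_edge_def by (cases c; cases d) (auto dest!: levels_eq)

lemma square_edge_commute: "square_edge c d = square_edge d c"
  unfolding square_edge_def by auto

locale induced_grid_path =
  fixes n :: nat and p :: "nat \<Rightarrow> nat \<times> nat" and T :: nat
  assumes path_in_grid: "m \<le> T \<Longrightarrow> p m \<in> {1..n} \<times> {1..n}"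
    and path_inj: "inj_on p {0..T}"
    and path_adj: "m < T \<Longrightarrow> grid_adj (p m) (p (m + 1))"
    and path_induced:
      "m \<le> T \<Longrightarrow> m' \<le> T \<Longrightarrow> grid_adj (p m) (p m') \<Longrightarrow> m' = m + 1 \<or> m = m' + 1"
begin

definition cells :: "(nat \<times> nat) set" where
  "cells = p ` {0..T}"

definition graph :: "(nat \<times> nat) set \<Rightarrow> vert set set" where
  "graph C = path_edges p T \<union> fan_edges n \<union> cell_edge ` C"

definition frontier :: "(nat \<times> nat) set \<Rightarrow> (nat \<times> nat) set" where
  "frontier C = {c \<in> cells - C. \<exists>d\<in>C. grid_adj c d}"

lemma cells_in_grid: "(a, b) \<in> cells \<Longrightarrow> 1 \<le> a \<and> a \<le> n \<and> 1 \<le> b \<and> b \<le> n"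
  using path_in_grid unfolding cells_def by fastforce

lemma path_edges_iff:
  "x \<in> path_edges p T \<longleftrightarrow> (\<exists>c\<in>cells. \<exists>d\<in>cells. grid_adj c d \<and> x = square_edge c d)"
proof
  assume "x \<in> path_edges p T"
  then obtain m where "m < T" "x = square_edge (p m) (p (m + 1))"
    unfolding path_edges_def by blast
  then show "\<exists>c\<in>cells. \<exists>d\<in>cells. grid_adj c d \<and> x = square_edge c d"
    using path_adj unfolding cells_def by fastforce
next
  assume "\<exists>c\<in>cells. \<exists>d\<in>cells. grid_adj c d \<and> x = square_edge c d"
  then obtain m m' where m: "m \<le> T" "m' \<le> T" "grid_adj (p m) (p m')" "x = square_edge (p m) (p m')"
    unfolding cells_def by auto
  from path_induced[OF m(1-3)] show "x \<in> path_edges p T"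
  proof
    assume "m' = m + 1"
    then show ?thesis using m unfolding path_edges_def by auto
  next
    assume "m = m' + 1"
    then show ?thesis using m square_edge_commute unfolding path_edges_def by auto
  qed
qed

lemma apex_notin_path_edges: "(3, 1) \<in> X \<Longrightarrow> X \<notin> path_edges p T"
  unfolding path_edges_def square_edge_def by auto

lemma apex_in_graph_iff:
  "(3, 1) \<in> X \<Longrightarrow> X \<in> graph C \<longleftrightarrow> X \<in> fan_edges n \<or> X \<in> cell_edge ` C"
  unfolding graph_def using apex_notin_path_edges by blast

lemma no_apex_in_graph_iff:
  "(3, 1) \<notin> X \<Longrightarrow> X \<in> graph C \<longleftrightarrow> X \<in> path_edges p T"
  unfolding graph_def fan_edges_def cell_edge_def by auto

lemma cell_triple_in_graph: "{(1, a), (2, b), (3, 1)} \<in> graph C \<longleftrightarrow> (a, b) \<in> C"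
proof -
  have "{(1, a), (2, b), (3, 1)} \<notin> fan_edges n"
    unfolding fan_edges_def by (auto dest!: levels_eq split: if_splits)
  then show ?thesis
    using apex_in_graph_iff[of "{(1, a), (2, b), (3, 1)}" C] cell_edge_in_image by blast
qed

lemma apex_pair_in_graph:
  assumes "l \<in> {1, 2}"
  shows "{(l, a), (l, b), (3, 1)} \<in> graph C \<longleftrightarrow>
    (b = a + 1 \<and> 1 \<le> a \<and> a < n) \<or> (a = b + 1 \<and> 1 \<le> b \<and> b < n)"
proof -
  have "{(l, a), (l, b), (3, 1)} \<notin> cell_edge ` C"
    using assms unfolding cell_edge_def by (auto dest!: levels_eq split: if_splits)
  moreover have "{(l, a), (l, b), (3, 1)} \<in> fan_edges n \<longleftrightarrow>
      (b = a + 1 \<and> 1 \<le> a \<and> a < n) \<or> (a = b + 1 \<and> 1 \<le> b \<and> b < n)"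
  proof
    assume "{(l, a), (l, b), (3, 1)} \<in> fan_edges n"
    then obtain l' j where "{(l', j), (l', j + 1), (3, 1)} = {(l, a), (l, b), (3, 1)}"
        "l' \<in> {1, 2}" "1 \<le> j" "j < n"
      unfolding fan_edges_def mem_Collect_eq by metis
    then show "(b = a + 1 \<and> 1 \<le> a \<and> a < n) \<or> (a = b + 1 \<and> 1 \<le> b \<and> b < n)"
      using assms by (auto dest!: levels_eq split: if_splits simp: doubleton_eq_iff)
  next
    assume "(b = a + 1 \<and> 1 \<le> a \<and> a < n) \<or> (a = b + 1 \<and> 1 \<le> b \<and> b < n)"
    then show "{(l, a), (l, b), (3, 1)} \<in> fan_edges n"
      using assms unfolding fan_edges_def by (auto simp: insert_commute)
  qed
  ultimately show ?thesis by (simp add: apex_in_graph_iff)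
qed

lemma row_triple_in_graph:
  "{(1, a), (1, a'), (2, b)} \<in> graph C \<longleftrightarrow>
    (a, b) \<in> cells \<and> (a', b) \<in> cells \<and> (a' = a + 1 \<or> a = a' + 1)"
proof -
  have "{(1, a), (1, a'), (2, b)} \<in> path_edges p T \<longleftrightarrow>
      (a, b) \<in> cells \<and> (a', b) \<in> cells \<and> (a' = a + 1 \<or> a = a' + 1)"
  proof
    assume "{(1, a), (1, a'), (2, b)} \<in> path_edges p T"
    then obtain c d where cd: "c \<in> cells" "d \<in> cells" "grid_adj c d"
        "square_edge c d = {(1, a), (1, a'), (2, b)}"
      unfolding path_edges_iff by metis
    then have "{a, a'} = {fst c, fst d}" "snd c = b" "snd d = b"
      unfolding square_edge_def by (auto dest!: levels_eq)
    with cd(1-3) show "(a, b) \<in> cells \<and> (a', b) \<in> cells \<and> (a' = a + 1 \<or> a = a' + 1)"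
      unfolding grid_adj_def by (cases c; cases d) (auto simp: doubleton_eq_iff)
  next
    assume h: "(a, b) \<in> cells \<and> (a', b) \<in> cells \<and> (a' = a + 1 \<or> a = a' + 1)"
    then have "grid_adj (a, b) (a', b)" unfolding grid_adj_def by auto
    moreover have "{(1, a), (1, a'), (2, b)} = square_edge (a, b) (a', b)"
      unfolding square_edge_def by auto
    ultimately show "{(1, a), (1, a'), (2, b)} \<in> path_edges p T"
      using h unfolding path_edges_iff by blast
  qed
  then show ?thesis by (simp add: no_apex_in_graph_iff)
qed

lemma column_triple_in_graph:
  "{(1, a), (2, b), (2, b')} \<in> graph C \<longleftrightarrow>
    (a, b) \<in> cells \<and> (a, b') \<in> cells \<and> (b' = b + 1 \<or> b = b' + 1)"
proof -
  have "{(1, a), (2, b), (2, b')} \<in> path_edges p T \<longleftrightarrow>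
      (a, b) \<in> cells \<and> (a, b') \<in> cells \<and> (b' = b + 1 \<or> b = b' + 1)"
  proof
    assume "{(1, a), (2, b), (2, b')} \<in> path_edges p T"
    then obtain c d where cd: "c \<in> cells" "d \<in> cells" "grid_adj c d"
        "square_edge c d = {(1, a), (2, b), (2, b')}"
      unfolding path_edges_iff by metis
    then have "fst c = a" "fst d = a" "{b, b'} = {snd c, snd d}"
      unfolding square_edge_def by (auto dest!: levels_eq)
    with cd(1-3) show "(a, b) \<in> cells \<and> (a, b') \<in> cells \<and> (b' = b + 1 \<or> b = b' + 1)"
      unfolding grid_adj_def by (cases c; cases d) (auto simp: doubleton_eq_iff)
  next
    assume h: "(a, b) \<in> cells \<and> (a, b') \<in> cells \<and> (b' = b + 1 \<or> b = b' + 1)"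
    then have "grid_adj (a, b) (a, b')" unfolding grid_adj_def by auto
    moreover have "{(1, a), (2, b), (2, b')} = square_edge (a, b) (a, b')"
      unfolding square_edge_def by auto
    ultimately show "{(1, a), (2, b), (2, b')} \<in> path_edges p T"
      using h unfolding path_edges_iff by blast
  qed
  then show ?thesis by (simp add: no_apex_in_graph_iff)
qed

lemma graph_edge_two_levels: "X \<in> graph C \<Longrightarrow> \<exists>u\<in>X. \<exists>u'\<in>X. fst u \<noteq> fst u'"
  unfolding graph_def path_edges_def square_edge_def fan_edges_def cell_edge_def by fastforce

lemma level_triple_notin_graph: "{(l, a), (l, b), (l, c)} \<notin> graph C"
  using graph_edge_two_levels by fastforce

lemmas graph_membership =
  cell_triple_in_graph apex_pair_in_graph row_triple_in_graph column_triple_in_graph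
  level_triple_notin_graph

lemma infected_in_frontier:
  assumes "C \<subseteq> cells" "e \<in> boot_step (grid_vertices n) (graph C)" "e \<notin> graph C"
  shows "e \<in> cell_edge ` frontier C"
proof -
  obtain w x y z where e: "e = {x, y, z}" and "distinct [w, x, y, z]"
    "w \<in> grid_vertices n" "x \<in> grid_vertices n" "y \<in> grid_vertices n" "z \<in> grid_vertices n"
    "{w, y, z} \<in> graph C" "{w, x, z} \<in> graph C" "{w, x, y} \<in> graph C"
    using boot_stepE[OF assms(2,3)] by metis
  then show ?thesis
    using assms(1,3) unfolding e
    apply -
    apply (elim grid_vertices_cases)
    apply (simp_all add: insert_commute_level graph_membership cell_edge_in_image frontier_def
        del: One_nat_def)
    apply ((elim disjE conjE; linarith) | (blast intro: grid_adj_row grid_adj_column))+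
    done
qed

lemma cell_edge_in_grid:
  assumes "c \<in> cells"
  shows "cell_edge c \<subseteq> grid_vertices n" "card (cell_edge c) = 3"
  using assms cells_in_grid[of "fst c" "snd c"] unfolding cell_edge_def grid_vertices_def by auto

lemma frontier_infected:
  assumes "C \<subseteq> cells" "c \<in> frontier C"
  shows "cell_edge c \<in> boot_step (grid_vertices n) (graph C)"
proof -
  obtain a b where ab: "c = (a, b)" by fastforce
  from assms(2) obtain d where "(a, b) \<in> cells" "(a, b) \<notin> C" "d \<in> C" and adj: "grid_adj (a, b) d"
    unfolding frontier_def ab by blast
  moreover from this have "d \<in> cells" using assms(1) by blast
  ultimately have facts: "(a, b) \<in> cells" "(a, b) \<notin> C" "d \<in> C" "d \<in> cells"
    "1 \<le> a" "a \<le> n" "1 \<le> b" "b \<le> n" "1 \<le> fst d" "fst d \<le> n" "1 \<le> snd d" "snd d \<le> n"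
    using cells_in_grid[of a b] cells_in_grid[of "fst d" "snd d"] by auto
  have e: "cell_edge c = {(1, a), (2, b), (3, 1)}" unfolding cell_edge_def ab by simp
  from adj consider (column) b' where "d = (a, b')" "b' = b + 1 \<or> b = b' + 1"
    | (row) a' where "d = (a', b)" "a' = a + 1 \<or> a = a' + 1"
    unfolding grid_adj_def by (cases d) auto
  then show ?thesis
  proof cases
    case column
    then have "b' \<noteq> b" "b = b' + 1 \<or> b' = b + 1"
      "b = b' + 1 \<and> b' < n \<or> b' = b + 1 \<and> b < n"
      using facts by auto
    with column facts show ?thesis
      unfolding e by (intro boot_stepI[where w = "(2, b')"])
        (simp_all add: insert_commute_level graph_membership grid_vertices_def del: One_nat_def)
  next
    case row
    then have "a' \<noteq> a" "a = a' + 1 \<or> a' = a + 1"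
      "a = a' + 1 \<and> a' < n \<or> a' = a + 1 \<and> a < n"
      using facts by auto
    with row facts show ?thesis
      unfolding e by (intro boot_stepI[where w = "(1, a')"])
        (simp_all add: insert_commute_level graph_membership grid_vertices_def del: One_nat_def)
  qed
qed

definition grow :: "nat set \<Rightarrow> nat set" where
  "grow I = {m. m \<le> T \<and> (\<exists>i\<in>I. m \<le> i + 1 \<and> i \<le> m + 1)}"

lemma frontier_image:
  assumes I: "I \<subseteq> {0..T}"
  shows "frontier (p ` I) = p ` (grow I - I)"
proof
  show "frontier (p ` I) \<subseteq> p ` (grow I - I)"
  proof
    fix c assume "c \<in> frontier (p ` I)"
    then obtain m i where m: "m \<le> T" "c = p m" "p m \<notin> p ` I" "i \<in> I" "grid_adj (p m) (p i)"
      unfolding frontier_def cells_def by auto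
    have "i \<le> T" using I m(4) by auto
    with m have "i = m + 1 \<or> m = i + 1" using path_induced by blast
    with m show "c \<in> p ` (grow I - I)" unfolding grow_def by fastforce
  qed
next
  show "p ` (grow I - I) \<subseteq> frontier (p ` I)"
  proof
    fix c assume "c \<in> p ` (grow I - I)"
    then obtain m i where m: "c = p m" "m \<le> T" "m \<notin> I" "i \<in> I" "m \<le> i + 1" "i \<le> m + 1"
      unfolding grow_def by auto
    have iT: "i \<le> T" using I m(4) by auto
    have "p m \<notin> p ` I" using inj_on_image_mem_iff[OF path_inj _ I] m(2,3) by simp
    moreover have "grid_adj (p m) (p i)"
    proof (cases "i = m + 1")
      case True
      then show ?thesis using path_adj iT by simp
    next
      case False
      then have "m = i + 1" using m(3-6) by (cases "m = i") auto
      then have "grid_adj (p i) (p m)" using path_adj[of i] m(2) by simp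
      then show ?thesis using grid_adj_commute by blast
    qed
    ultimately show "c \<in> frontier (p ` I)" unfolding frontier_def cells_def using m iT by auto
  qed
qed

lemma grow_subset: "grow I \<subseteq> {0..T}"
  unfolding grow_def by auto

lemma subset_grow:
  assumes "I \<subseteq> {0..T}"
  shows "I \<subseteq> grow I"
proof
  fix i assume "i \<in> I"
  then show "i \<in> grow I" using assms unfolding grow_def by (intro CollectI conjI bexI[of _ i]) auto
qed

lemma boot_step_graph:
  assumes I: "I \<subseteq> {0..T}"
  shows "boot_step (grid_vertices n) (graph (p ` I)) = graph (p ` grow I)"
proof -
  have C: "p ` I \<subseteq> cells" using I unfolding cells_def by auto
  have "boot_step (grid_vertices n) (graph (p ` I)) = graph (p ` I) \<union> cell_edge ` frontier (p ` I)"
  proof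
    show "boot_step (grid_vertices n) (graph (p ` I))
        \<subseteq> graph (p ` I) \<union> cell_edge ` frontier (p ` I)"
      using infected_in_frontier[OF C] unfolding boot_step_def by blast
    show "graph (p ` I) \<union> cell_edge ` frontier (p ` I)
        \<subseteq> boot_step (grid_vertices n) (graph (p ` I))"
      using frontier_infected[OF C] unfolding boot_step_def by blast
  qed
  also have "\<dots> = graph (p ` (I \<union> (grow I - I)))"
    unfolding frontier_image[OF I] graph_def by (auto simp: image_Un)
  also have "I \<union> (grow I - I) = grow I"
    using subset_grow[OF I] by blast
  finally show ?thesis .
qed

lemma boot_graph:
  assumes "I \<subseteq> {0..T}"
  shows "boot (grid_vertices n) (graph (p ` I)) i = graph (p ` (grow ^^ i) I)"
proof (induction i)
  case 0
  show ?case by (simp add: boot_def)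
next
  case (Suc i)
  have "(grow ^^ i) I \<subseteq> {0..T}" using assms grow_subset by (cases i) auto
  then show ?case using Suc by (simp add: boot_def boot_step_graph)
qed

lemma grow_interval:
  assumes "a \<le> b" "b \<le> T"
  shows "grow {a..b} = {a - 1..min (b + 1) T}"
proof (intro set_eqI iffI)
  fix m assume "m \<in> grow {a..b}"
  then show "m \<in> {a - 1..min (b + 1) T}" unfolding grow_def by auto
next
  fix m assume m: "m \<in> {a - 1..min (b + 1) T}"
  then have "max a (min m b) \<in> {a..b}" "m \<le> max a (min m b) + 1" "max a (min m b) \<le> m + 1"
    using assms by auto
  then show "m \<in> grow {a..b}" using m unfolding grow_def by auto
qed

lemma iterate_grow_initial: "i \<le> T \<Longrightarrow> (grow ^^ i) {0} = {0..i}"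
  by (induction i) (auto simp: grow_interval)

lemma iterate_grow_final: "i \<le> T \<Longrightarrow> (grow ^^ i) {T} = {T - i..T}"
  by (induction i) (auto simp: grow_interval)

lemma cell_edge_notin_graph_empty: "cell_edge c \<notin> graph {}"
  unfolding cell_edge_def using cell_triple_in_graph[of "fst c" "snd c" "{}"] by simp

lemma graph_diff:
  assumes "B \<subseteq> A" "A \<subseteq> {0..T}"
  shows "graph (p ` A) - graph (p ` B) = cell_edge ` p ` (A - B)"
proof -
  have "inj_on (cell_edge \<circ> p) {0..T}"
    using path_inj cell_edge_inj by (auto simp: inj_on_def)
  moreover have "A - B \<subseteq> {0..T}" "B \<subseteq> {0..T}" using assms by auto
  ultimately have "(cell_edge \<circ> p) ` (A - B) = (cell_edge \<circ> p) ` A - (cell_edge \<circ> p) ` B"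
    by (rule inj_on_image_set_diff)
  then have "cell_edge ` p ` (A - B) = cell_edge ` p ` A - cell_edge ` p ` B"
    by (simp add: image_comp)
  moreover have "graph (p ` A) - graph (p ` B) = cell_edge ` p ` A - cell_edge ` p ` B"
    unfolding graph_def using cell_edge_notin_graph_empty[unfolded graph_def] by blast
  ultimately show ?thesis by simp
qed

lemma square_edge_in_grid:
  assumes "c \<in> cells" "d \<in> cells" "grid_adj c d"
  shows "square_edge c d \<subseteq> grid_vertices n" "card (square_edge c d) = 3"
  using assms cells_in_grid[of "fst c" "snd c"] cells_in_grid[of "fst d" "snd d"]
  unfolding square_edge_def grid_adj_def grid_vertices_def by (auto simp: insert_commute)

lemma graph_is_3graph:
  assumes "C \<subseteq> cells"
  shows "is_3graph (grid_vertices n) (graph C)"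
  unfolding is_3graph_def
proof
  fix x assume "x \<in> graph C"
  then consider (path) c d where "c \<in> cells" "d \<in> cells" "grid_adj c d" "x = square_edge c d"
    | (fan) l j where "x = {(l, j), (l, j + 1), (3, 1)}" "l \<in> {1, 2}" "1 \<le> j" "j < n"
    | (cell) c where "c \<in> C" "x = cell_edge c"
    unfolding graph_def Un_iff path_edges_iff fan_edges_def by blast
  then show "x \<subseteq> grid_vertices n \<and> card x = 3"
  proof cases
    case path
    then show ?thesis using square_edge_in_grid by simp
  next
    case fan
    then show ?thesis unfolding grid_vertices_def by auto
  next
    case cell
    then show ?thesis using assms cell_edge_in_grid by blast
  qed
qed

lemma boot_from_first_cell:
  "i \<le> T \<Longrightarrow> boot (grid_vertices n) (graph {p 0}) i = graph (p ` {0..i})"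
  using boot_graph[of "{0}" i] iterate_grow_initial by simp

lemma boot_from_last_cell:
  "i \<le> T \<Longrightarrow> boot (grid_vertices n) (graph {p T}) i = graph (p ` {T - i..T})"
  using boot_graph[of "{T}" i] iterate_grow_final by simp

lemma boot_from_first_cell_step:
  assumes "i \<in> {1..T}"
  shows "boot (grid_vertices n) (graph {p 0}) i - boot (grid_vertices n) (graph {p 0}) (i - 1)
    = {cell_edge (p i)}"
proof -
  have "boot (grid_vertices n) (graph {p 0}) i - boot (grid_vertices n) (graph {p 0}) (i - 1)
      = graph (p ` {0..i}) - graph (p ` {0..i - 1})"
    using assms boot_from_first_cell[of i] boot_from_first_cell[of "i - 1"] by auto
  also have "\<dots> = cell_edge ` p ` ({0..i} - {0..i - 1})"
    using assms by (intro graph_diff) auto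
  also have "{0..i} - {0..i - 1} = {i}" using assms by auto
  finally show ?thesis by simp
qed

lemma boot_from_last_cell_step:
  assumes "i \<in> {1..T}"
  shows "boot (grid_vertices n) (graph {p T}) i - boot (grid_vertices n) (graph {p T}) (i - 1)
    = {cell_edge (p (T - i))}"
proof -
  have "boot (grid_vertices n) (graph {p T}) i - boot (grid_vertices n) (graph {p T}) (i - 1)
      = graph (p ` {T - i..T}) - graph (p ` {T - (i - 1)..T})"
    using assms boot_from_last_cell[of i] boot_from_last_cell[of "i - 1"] by auto
  also have "\<dots> = cell_edge ` p ` ({T - i..T} - {T - (i - 1)..T})"
    using assms by (intro graph_diff) auto
  also have "{T - i..T} - {T - (i - 1)..T} = {T - i}" using assms by auto
  finally show ?thesis by simp
qed

theorem graph_sequential: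
  assumes T: "1 \<le> T" and e: "\<And>i. i \<le> T \<Longrightarrow> e i = cell_edge (p i)"
  shows "sequential (grid_vertices n) (graph {p 0}) e T"
proof -
  let ?V = "grid_vertices n"
  have cells: "i \<le> T \<Longrightarrow> p i \<in> cells" for i unfolding cells_def by simp
  have e0: "e 0 = cell_edge (p 0)" and eT: "e T = cell_edge (p T)" using e by auto
  have "p T \<noteq> p 0" using inj_onD[OF path_inj, of T 0] T by auto
  then have "e T \<noteq> e 0" unfolding e0 eT using cell_edge_inj by blast
  then have swapped: "(graph {p 0} \<union> {e T}) - {e 0} = graph {p T}"
    unfolding graph_def e0 eT using cell_edge_notin_graph_empty[of "p 0", unfolded graph_def]
    by auto
  have removed: "graph {p 0} - {e 0} = graph (p ` {})"
    unfolding graph_def e0 using cell_edge_notin_graph_empty[of "p 0", unfolded graph_def]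
    by auto
  show ?thesis
    unfolding sequential_def stationary_def
  proof (intro conjI allI impI ballI)
    show "is_3graph ?V (graph {p 0})" using graph_is_3graph cells by simp
    show "e i \<subseteq> ?V" "card (e i) = 3" if "i \<le> T" for i
      using cell_edge_in_grid cells e that by auto
    show "e 0 \<in> graph {p 0}" unfolding graph_def e0 by simp
    show "boot_step ?V (boot ?V (graph {p 0}) T) = boot ?V (graph {p 0}) T"
      using boot_step_graph[of "{0..T}"] grow_interval[of 0 T] by (simp add: boot_from_first_cell)
    show "boot_step ?V (graph {p 0} - {e 0}) = graph {p 0} - {e 0}"
      using boot_step_graph[of "{}"] unfolding removed by (simp add: grow_def)
  qed (use boot_from_first_cell_step boot_from_last_cell_step swapped e in auto)
qed

end

section \<open>The spiral\<close>

definition ring_length :: "nat \<Rightarrow> nat \<Rightarrow> nat" where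
  "ring_length k s = 16 * (k - s) - 4"

text \<open>Ring \<open>s\<close> of the spiral runs from \<open>(2s - 1, 2s - 1)\<close> along the lines \<open>a = 2s - 1\<close>,
  \<open>b = 4k - 2s - 1\<close>, \<open>a = 4k - 2s - 1\<close> and \<open>b = 2s + 1\<close> of the grid to \<open>(2s + 1, 2s + 1)\<close>,
  the first cell of ring \<open>s + 1\<close>.\<close>

definition ring_cell :: "nat \<Rightarrow> nat \<Rightarrow> nat \<Rightarrow> nat \<times> nat" where
  "ring_cell k s a =
     (if a \<le> 4 * (k - s) then (2 * s - 1, 2 * s - 1 + a)
      else if a \<le> 8 * (k - s) then (6 * s + a - (4 * k + 1), 4 * k - 2 * s - 1)
      else if a \<le> 12 * (k - s) - 2 then (4 * k - 2 * s - 1, 12 * k - (10 * s + 1 + a))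
      else (16 * k - (14 * s + 3 + a), 2 * s + 1))"

text \<open>The same formula over \<open>int\<close>, free of truncated subtraction, where the case
  analyses are decided by \<open>smt\<close>. Position \<open>0\<close> of a ring other than the first repeats
  the last position of the previous ring, hence the side conditions \<open>1 \<le> A \<or> S = 1\<close>.\<close>

definition ring_cell_int :: "int \<Rightarrow> int \<Rightarrow> int \<Rightarrow> int \<times> int" where
  "ring_cell_int K S A =
     (if A \<le> 4 * (K - S) then (2 * S - 1, 2 * S - 1 + A)
      else if A \<le> 8 * (K - S) then (6 * S + A - (4 * K + 1), 4 * K - 2 * S - 1)
      else if A \<le> 12 * (K - S) - 2 then (4 * K - 2 * S - 1, 12 * K - (10 * S + 1 + A))
      else (16 * K - (14 * S + 3 + A), 2 * S + 1))"

lemma ring_cell_int_adj_consecutive: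
  fixes K S T A B :: int
  assumes "1 \<le> S" "S < K" "1 \<le> T" "T < K" "1 \<le> A \<or> S = 1" "1 \<le> B \<or> T = 1"
    "0 \<le> A" "A \<le> 16 * (K - S) - 4" "0 \<le> B" "B \<le> 16 * (K - T) - 4"
    and adj: "grid_adj (ring_cell_int K S A) (ring_cell_int K T B)"
  shows "(S = T \<and> (B = A + 1 \<or> A = B + 1)) \<or> (T = S + 1 \<and> A = 16 * (K - S) - 4 \<and> B = 1)
    \<or> (S = T + 1 \<and> B = 16 * (K - T) - 4 \<and> A = 1)"
  using adj unfolding ring_cell_int_def grid_adj_def
  apply (simp only: split: if_split_asm)
  apply (simp_all only: fst_conv snd_conv)
  using assms(1-10) apply smt+
  done

lemma ring_cell_int_inj:
  fixes K S T A B :: int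
  assumes "1 \<le> S" "S < K" "1 \<le> T" "T < K" "1 \<le> A \<or> S = 1" "1 \<le> B \<or> T = 1"
    "0 \<le> A" "A \<le> 16 * (K - S) - 4" "0 \<le> B" "B \<le> 16 * (K - T) - 4"
    and eq: "ring_cell_int K S A = ring_cell_int K T B"
  shows "S = T \<and> A = B"
  using eq unfolding ring_cell_int_def
  apply (simp only: split: if_split_asm)
  apply (simp_all only: prod.inject)
  using assms(1-10) apply smt+
  done

lemma ring_cell_int_step:
  fixes K S A :: int
  assumes "1 \<le> S" "S < K" "0 \<le> A" "A < 16 * (K - S) - 4"
  shows "grid_adj (ring_cell_int K S A) (ring_cell_int K S (A + 1))"
  using assms unfolding ring_cell_int_def grid_adj_def by auto

lemma ring_cell_eq_int:
  assumes "1 \<le> s" "s < k" "a \<le> ring_length k s"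
  shows "map_prod int int (ring_cell k s a) = ring_cell_int (int k) (int s) (int a)"
  using assms unfolding ring_cell_def ring_cell_int_def ring_length_def by (auto simp: of_nat_diff)

lemma ring_cell_leg2:
  assumes "1 \<le> s" "s < k" "4 * (k - s) \<le> a" "a \<le> 8 * (k - s)"
  shows "ring_cell k s a = (6 * s + a - (4 * k + 1), 4 * k - 2 * s - 1)"
  using assms unfolding ring_cell_def by auto

lemma ring_cell_leg3:
  assumes "1 \<le> s" "s < k" "8 * (k - s) \<le> a" "a \<le> 12 * (k - s) - 2"
  shows "ring_cell k s a = (4 * k - 2 * s - 1, 12 * k - (10 * s + 1 + a))"
  using assms unfolding ring_cell_def by auto

lemma ring_cell_leg4:
  assumes "1 \<le> s" "s < k" "12 * (k - s) - 2 \<le> a" "a \<le> 16 * (k - s) - 4"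
  shows "ring_cell k s a = (16 * k - (14 * s + 3 + a), 2 * s + 1)"
proof -
  have "map_prod int int (ring_cell k s a) = ring_cell_int (int k) (int s) (int a)"
    using assms by (intro ring_cell_eq_int) (auto simp: ring_length_def)
  moreover have "12 * (int k - int s) - 2 \<le> int a" "int a \<le> 16 * (int k - int s) - 4"
    using assms by arith+
  ultimately have "map_prod int int (ring_cell k s a)
      = map_prod int int (16 * k - (14 * s + 3 + a), 2 * s + 1)"
    using assms(2) unfolding ring_cell_int_def by (auto simp: of_nat_diff)
  then show ?thesis by (simp add: prod_eq_iff)
qed

lemma int_ring_length: "s < k \<Longrightarrow> int (ring_length k s) = 16 * (int k - int s) - 4"
  unfolding ring_length_def by (simp add: of_nat_diff)

lemma ring_cell_adj_consecutive:
  assumes s: "1 \<le> s" "s < k" "a \<le> ring_length k s" "1 \<le> a \<or> s = 1"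
    and t: "1 \<le> t" "t < k" "b \<le> ring_length k t" "1 \<le> b \<or> t = 1"
    and adj: "grid_adj (ring_cell k s a) (ring_cell k t b)"
  shows "(s = t \<and> (b = a + 1 \<or> a = b + 1)) \<or> (t = s + 1 \<and> a = ring_length k s \<and> b = 1)
    \<or> (s = t + 1 \<and> b = ring_length k t \<and> a = 1)"
proof -
  have "grid_adj (ring_cell_int (int k) (int s) (int a)) (ring_cell_int (int k) (int t) (int b))"
    using adj ring_cell_eq_int[OF s(1-3)] ring_cell_eq_int[OF t(1-3)] grid_adj_int by metis
  then have "(int s = int t \<and> (int b = int a + 1 \<or> int a = int b + 1))
      \<or> (int t = int s + 1 \<and> int a = int (ring_length k s) \<and> int b = 1)
      \<or> (int s = int t + 1 \<and> int b = int (ring_length k t) \<and> int a = 1)"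
    unfolding int_ring_length[OF s(2)] int_ring_length[OF t(2)]
    using s t int_ring_length[OF s(2)] int_ring_length[OF t(2)]
    by (intro ring_cell_int_adj_consecutive) auto
  then show ?thesis by linarith
qed

lemma ring_cell_inj:
  assumes s: "1 \<le> s" "s < k" "a \<le> ring_length k s" "1 \<le> a \<or> s = 1"
    and t: "1 \<le> t" "t < k" "b \<le> ring_length k t" "1 \<le> b \<or> t = 1"
    and eq: "ring_cell k s a = ring_cell k t b"
  shows "s = t \<and> a = b"
proof -
  have "ring_cell_int (int k) (int s) (int a) = ring_cell_int (int k) (int t) (int b)"
    using eq ring_cell_eq_int[OF s(1-3)] ring_cell_eq_int[OF t(1-3)] by metis
  then have "int s = int t \<and> int a = int b"
    using s t int_ring_length[OF s(2)] int_ring_length[OF t(2)]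
    by (intro ring_cell_int_inj) auto
  then show ?thesis by simp
qed

lemma ring_cell_step:
  assumes "1 \<le> s" "s < k" "a < ring_length k s"
  shows "grid_adj (ring_cell k s a) (ring_cell k s (a + 1))"
proof -
  have "grid_adj (ring_cell_int (int k) (int s) (int a))
      (ring_cell_int (int k) (int s) (int a + 1))"
    using assms int_ring_length[OF assms(2)] by (intro ring_cell_int_step) auto
  moreover have "map_prod int int (ring_cell k s (a + 1))
      = ring_cell_int (int k) (int s) (int a + 1)"
    using ring_cell_eq_int[OF assms(1,2), of "a + 1"] assms(3) by (simp add: add.commute)
  ultimately show ?thesis
    using ring_cell_eq_int[OF assms(1,2), of a] assms(3) grid_adj_int by (metis less_imp_le_nat)
qed

lemma ring_cell_in_grid:
  assumes "1 \<le> s" "s < k" "a \<le> ring_length k s"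
  shows "ring_cell k s a \<in> {1..4 * k - 3} \<times> {1..4 * k - 3}"
proof -
  have "int a \<le> 16 * (int k - int s) - 4" using assms int_ring_length by fastforce
  then have "ring_cell_int (int k) (int s) (int a) \<in> {1..4 * int k - 3} \<times> {1..4 * int k - 3}"
    using assms(1,2) unfolding ring_cell_int_def by auto
  then show ?thesis
    using ring_cell_eq_int[OF assms] assms(2) by (cases "ring_cell k s a") auto
qed

lemma ring_cell_junction:
  assumes "1 \<le> s" "s + 1 < k"
  shows "ring_cell k s (ring_length k s) = ring_cell k (s + 1) 0"
  using assms ring_cell_leg4[of s k "ring_length k s"] unfolding ring_length_def
  by (simp add: ring_cell_def)

lemma psum_pred: "1 \<le> s \<Longrightarrow> psum k s = psum k (s - 1) + ring_length k s"
  unfolding psum_def ring_length_def by (cases s) auto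

lemma psum_mono: "s \<le> t \<Longrightarrow> psum k s \<le> psum k t"
  unfolding psum_def by (rule sum_mono2) auto

lemma sidx_eqI:
  assumes "1 \<le> s" "s < k" "psum k (s - 1) < i" "i \<le> psum k s"
  shows "sidx k i = s"
  unfolding sidx_def
proof (rule the_equality)
  show "s \<in> {1..k - 1} \<and> psum k (s - 1) < i \<and> i \<le> psum k s" using assms by auto
next
  fix s' assume s': "s' \<in> {1..k - 1} \<and> psum k (s' - 1) < i \<and> i \<le> psum k s'"
  have "\<not> s' < s"
  proof
    assume "s' < s"
    then have "psum k s' \<le> psum k (s - 1)" by (intro psum_mono) arith
    then show False using s' assms by linarith
  qed
  moreover have "\<not> s < s'"
  proof
    assume "s < s'"
    then have "psum k s \<le> psum k (s' - 1)" by (intro psum_mono) arith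
    then show False using s' assms by linarith
  qed
  ultimately show "s' = s" by simp
qed

lemma ring_index_exists:
  assumes "1 \<le> i" "i \<le> psum k t"
  shows "\<exists>s. 1 \<le> s \<and> s \<le> t \<and> psum k (s - 1) < i \<and> i \<le> psum k s"
  using assms
proof (induction t)
  case 0
  then show ?case by (simp add: psum_def)
next
  case (Suc t)
  show ?case
  proof (cases "i \<le> psum k t")
    case True
    then show ?thesis using Suc by force
  next
    case False
    then show ?thesis using Suc.prems by (intro exI[of _ "Suc t"]) auto
  qed
qed

text \<open>\<open>sidx k 0\<close> is unspecified, so the first cell is given explicitly.\<close>

definition spiral_cell :: "nat \<Rightarrow> nat \<Rightarrow> nat \<times> nat" where
  "spiral_cell k m =
     (if m = 0 then (1, 1) else ring_cell k (sidx k m) (m - psum k (sidx k m - 1)))"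

lemma spiral_cell_ring:
  assumes "1 \<le> s" "s < k" "a \<le> ring_length k s"
  shows "spiral_cell k (psum k (s - 1) + a) = ring_cell k s a"
proof (cases "a = 0")
  case False
  then have "sidx k (psum k (s - 1) + a) = s"
    using assms psum_pred[of s k] by (intro sidx_eqI) auto
  then show ?thesis using False unfolding spiral_cell_def by simp
next
  case True
  show ?thesis
  proof (cases "s = 1")
    case True
    then show ?thesis using \<open>a = 0\<close> by (simp add: spiral_cell_def ring_cell_def psum_def)
  next
    case False
    then have s: "1 \<le> s - 1" "s - 1 + 1 < k" using assms by auto
    have "psum k (s - 1) = psum k (s - 1 - 1) + ring_length k (s - 1)"
      using psum_pred s(1) by blast
    moreover have "0 < ring_length k (s - 1)" using s unfolding ring_length_def by simp
    ultimately have "sidx k (psum k (s - 1)) = s - 1"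
      using s by (intro sidx_eqI) auto
    then have "spiral_cell k (psum k (s - 1)) = ring_cell k (s - 1) (ring_length k (s - 1))"
      using \<open>psum k (s - 1) = _\<close> \<open>0 < ring_length k (s - 1)\<close> unfolding spiral_cell_def by simp
    then show ?thesis using ring_cell_junction[OF s] \<open>a = 0\<close> s by simp
  qed
qed

lemma spiral_position:
  assumes "2 \<le> k" "m \<le> T1 k"
  obtains s a where "1 \<le> s" "s < k" "a \<le> ring_length k s" "1 \<le> a \<or> s = 1"
    "m = psum k (s - 1) + a" "spiral_cell k m = ring_cell k s a"
proof -
  have "\<exists>s a. 1 \<le> s \<and> s < k \<and> a \<le> ring_length k s \<and> (1 \<le> a \<or> s = 1) \<and> m = psum k (s - 1) + a"
  proof (cases "m = 0")
    case True
    then show ?thesis using assms(1) by (intro exI[of _ 1] exI[of _ 0]) (simp add: psum_def)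
  next
    case False
    then obtain s where s: "1 \<le> s" "s \<le> k - 1" "psum k (s - 1) < m" "m \<le> psum k s"
      using ring_index_exists[of m k "k - 1"] assms unfolding T1_def by auto
    then show ?thesis
      using psum_pred[of s k] by (intro exI[of _ s] exI[of _ "m - psum k (s - 1)"]) auto
  qed
  then show ?thesis using that spiral_cell_ring by blast
qed

lemma T1_pos:
  assumes "2 \<le> k"
  shows "1 \<le> T1 k"
proof -
  have "psum k 1 \<le> psum k (k - 1)" using assms by (intro psum_mono) simp
  moreover have "psum k 1 = 16 * (k - 1) - 4" by (simp add: psum_def)
  ultimately show ?thesis using assms unfolding T1_def by arith
qed

lemma spiral_step_position:
  assumes "2 \<le> k" "m < T1 k"
  obtains s a where "1 \<le> s" "s < k" "a < ring_length k s" "m = psum k (s - 1) + a"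
    "spiral_cell k m = ring_cell k s a" "spiral_cell k (m + 1) = ring_cell k s (a + 1)"
proof -
  obtain s b where s: "1 \<le> s" "s < k" "b \<le> ring_length k s" "1 \<le> b \<or> s = 1"
      "m + 1 = psum k (s - 1) + b"
    using spiral_position[OF assms(1), of "m + 1"] assms(2) by (metis Suc_eq_plus1 Suc_leI)
  have b: "1 \<le> b" using s(4,5) by (auto simp: psum_def)
  then have m: "m = psum k (s - 1) + (b - 1)" using s(5) by simp
  show ?thesis
  proof (rule that[OF s(1,2) _ m])
    show "b - 1 < ring_length k s" using s(3) b by simp
    show "spiral_cell k m = ring_cell k s (b - 1)"
      using spiral_cell_ring[OF s(1,2), of "b - 1"] s(3) m by simp
    show "spiral_cell k (m + 1) = ring_cell k s (b - 1 + 1)"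
      using spiral_cell_ring[OF s(1-3)] s(5) b by simp
  qed
qed

lemma spiral_cell_inj:
  assumes "2 \<le> k"
  shows "inj_on (spiral_cell k) {0..T1 k}"
proof (rule inj_onI)
  fix m m' assume "m \<in> {0..T1 k}" "m' \<in> {0..T1 k}" and eq: "spiral_cell k m = spiral_cell k m'"
  then obtain s a t b where
    s: "1 \<le> s" "s < k" "a \<le> ring_length k s" "1 \<le> a \<or> s = 1" "m = psum k (s - 1) + a"
      "spiral_cell k m = ring_cell k s a" and
    t: "1 \<le> t" "t < k" "b \<le> ring_length k t" "1 \<le> b \<or> t = 1" "m' = psum k (t - 1) + b"
      "spiral_cell k m' = ring_cell k t b"
    using spiral_position[OF assms] by (metis atLeastAtMost_iff)
  have "s = t \<and> a = b" using ring_cell_inj[OF s(1-4) t(1-4)] eq s(6) t(6) by simp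
  then show "m = m'" using s(5) t(5) by simp
qed

lemma spiral_cell_adj_consecutive:
  assumes "2 \<le> k" "m \<le> T1 k" "m' \<le> T1 k" "grid_adj (spiral_cell k m) (spiral_cell k m')"
  shows "m' = m + 1 \<or> m = m' + 1"
proof -
  obtain s a t b where
    s: "1 \<le> s" "s < k" "a \<le> ring_length k s" "1 \<le> a \<or> s = 1" "m = psum k (s - 1) + a"
      "spiral_cell k m = ring_cell k s a" and
    t: "1 \<le> t" "t < k" "b \<le> ring_length k t" "1 \<le> b \<or> t = 1" "m' = psum k (t - 1) + b"
      "spiral_cell k m' = ring_cell k t b"
    using spiral_position[OF assms(1)] assms(2,3) by metis
  have "(s = t \<and> (b = a + 1 \<or> a = b + 1)) \<or> (t = s + 1 \<and> a = ring_length k s \<and> b = 1)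
      \<or> (s = t + 1 \<and> b = ring_length k t \<and> a = 1)"
    using ring_cell_adj_consecutive[OF s(1-4) t(1-4)] assms(4) s(6) t(6) by simp
  then show ?thesis
    using s(1,5) t(1,5) psum_pred[of s k] psum_pred[of t k] by auto
qed

lemma spiral_induced_grid_path:
  assumes k: "2 \<le> k"
  shows "induced_grid_path (4 * k - 3) (spiral_cell k) (T1 k)"
proof
  fix m assume "m \<le> T1 k"
  then obtain s a where "1 \<le> s" "s < k" "a \<le> ring_length k s" "spiral_cell k m = ring_cell k s a"
    using spiral_position[OF k] by metis
  then show "spiral_cell k m \<in> {1..4 * k - 3} \<times> {1..4 * k - 3}"
    using ring_cell_in_grid by simp
next
  fix m assume "m < T1 k"
  then obtain s a where "1 \<le> s" "s < k" "a < ring_length k s" "spiral_cell k m = ring_cell k s a"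
      "spiral_cell k (m + 1) = ring_cell k s (a + 1)"
    using spiral_step_position[OF k] by metis
  then show "grid_adj (spiral_cell k m) (spiral_cell k (m + 1))"
    using ring_cell_step by simp
qed (use spiral_cell_inj spiral_cell_adj_consecutive k in auto)

lemma setcompr_reindex:
  assumes "\<And>j. j \<in> J \<Longrightarrow> h j \<in> A \<and> f j = g (h j)"
    and "\<And>a. a \<in> A \<Longrightarrow> h' a \<in> J \<and> g a = f (h' a)"
  shows "{f j | j. j \<in> J} = {g a | a. a \<in> A}"
  using assms by blast

definition ring_edge :: "nat \<Rightarrow> nat \<Rightarrow> nat \<Rightarrow> vert set" where
  "ring_edge k s a = square_edge (ring_cell k s a) (ring_cell k s (a + 1))"

lemma E1_ring_edges:
  assumes "1 \<le> s" "s < k"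
  shows "E1 k s = {ring_edge k s a | a. a \<in> {0..<4 * (k - s)}}"
  unfolding E1_def
proof (rule setcompr_reindex[where h = "\<lambda>j. j - (2 * s - 1)" and h' = "\<lambda>a. 2 * s - 1 + a"])
  have edge: "ring_edge k s a = {v 1 (2 * s - 1), v 2 (2 * s - 1 + a), v 2 (2 * s - 1 + a + 1)}"
    if "a < 4 * (k - s)" for a
    using that by (simp add: ring_edge_def ring_cell_def square_edge_def v_def)
  show "j - (2 * s - 1) \<in> {0..<4 * (k - s)} \<and>
      {v 1 (2 * s - 1), v 2 j, v 2 (j + 1)} = ring_edge k s (j - (2 * s - 1))"
    if "j \<in> {2 * s - 1..4 * k - 2 - 2 * s}" for j
    using that assms edge[of "j - (2 * s - 1)"] by auto
  show "2 * s - 1 + a \<in> {2 * s - 1..4 * k - 2 - 2 * s} \<and>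
      ring_edge k s a = {v 1 (2 * s - 1), v 2 (2 * s - 1 + a), v 2 (2 * s - 1 + a + 1)}"
    if "a \<in> {0..<4 * (k - s)}" for a
    using that assms edge[of a] by auto
qed

lemma E2_ring_edges:
  assumes "1 \<le> s" "s < k"
  shows "E2 k s = {ring_edge k s a | a. a \<in> {4 * (k - s)..<8 * (k - s)}}"
  unfolding E2_def
proof (rule setcompr_reindex[where h = "\<lambda>j. j + (4 * k + 1) - 6 * s"
      and h' = "\<lambda>a. 6 * s + a - (4 * k + 1)"])
  have edge: "ring_edge k s a =
      {v 1 (6 * s + a - (4 * k + 1)), v 1 (6 * s + a - (4 * k + 1) + 1), v 2 (4 * k - 1 - 2 * s)}"
    if "4 * (k - s) \<le> a" "a < 8 * (k - s)" for a
  proof -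
    have "6 * s + (a + 1) - (4 * k + 1) = 6 * s + a - (4 * k + 1) + 1"
      "4 * k - 2 * s - 1 = 4 * k - 1 - 2 * s"
      using that assms by arith+
    then show ?thesis
      using that assms ring_cell_leg2[of s k a] ring_cell_leg2[of s k "a + 1"]
      by (simp add: ring_edge_def square_edge_def v_def insert_commute)
  qed
  show "j + (4 * k + 1) - 6 * s \<in> {4 * (k - s)..<8 * (k - s)} \<and>
      {v 1 j, v 1 (j + 1), v 2 (4 * k - 1 - 2 * s)} = ring_edge k s (j + (4 * k + 1) - 6 * s)"
    if "j \<in> {2 * s - 1..4 * k - 2 - 2 * s}" for j
  proof -
    have "j + (4 * k + 1) - 6 * s \<in> {4 * (k - s)..<8 * (k - s)}"
      "6 * s + (j + (4 * k + 1) - 6 * s) - (4 * k + 1) = j"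
      using that assms by auto
    then show ?thesis using edge by simp
  qed
  show "6 * s + a - (4 * k + 1) \<in> {2 * s - 1..4 * k - 2 - 2 * s} \<and> ring_edge k s a =
      {v 1 (6 * s + a - (4 * k + 1)), v 1 (6 * s + a - (4 * k + 1) + 1), v 2 (4 * k - 1 - 2 * s)}"
    if "a \<in> {4 * (k - s)..<8 * (k - s)}" for a
    using that assms edge[of a] by auto
qed

lemma E3_ring_edges:
  assumes "1 \<le> s" "s < k"
  shows "E3 k s = {ring_edge k s a | a. a \<in> {8 * (k - s)..<12 * (k - s) - 2}}"
  unfolding E3_def
proof (rule setcompr_reindex[where h = "\<lambda>j. 12 * k - (10 * s + 2 + j)"
      and h' = "\<lambda>a. 12 * k - (10 * s + 2 + a)"])
  have edge: "ring_edge k s a = {v 1 (4 * k - 1 - 2 * s), v 2 (12 * k - (10 * s + 2 + a)),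
      v 2 (12 * k - (10 * s + 2 + a) + 1)}"
    if "8 * (k - s) \<le> a" "a < 12 * (k - s) - 2" for a
  proof -
    have "12 * k - (10 * s + 1 + a) = 12 * k - (10 * s + 2 + a) + 1"
      "12 * k - (10 * s + 1 + (a + 1)) = 12 * k - (10 * s + 2 + a)"
      "4 * k - 2 * s - 1 = 4 * k - 1 - 2 * s"
      using that assms by arith+
    then show ?thesis
      using that assms ring_cell_leg3[of s k a] ring_cell_leg3[of s k "a + 1"]
      by (simp add: ring_edge_def square_edge_def v_def insert_commute)
  qed
  show "12 * k - (10 * s + 2 + j) \<in> {8 * (k - s)..<12 * (k - s) - 2} \<and>
      {v 1 (4 * k - 1 - 2 * s), v 2 j, v 2 (j + 1)} = ring_edge k s (12 * k - (10 * s + 2 + j))"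
    if "j \<in> {2 * s + 1..4 * k - 2 - 2 * s}" for j
  proof -
    have "12 * k - (10 * s + 2 + j) \<in> {8 * (k - s)..<12 * (k - s) - 2}"
      "12 * k - (10 * s + 2 + (12 * k - (10 * s + 2 + j))) = j"
      using that assms by auto
    then show ?thesis using edge by simp
  qed
  show "12 * k - (10 * s + 2 + a) \<in> {2 * s + 1..4 * k - 2 - 2 * s} \<and>
      ring_edge k s a = {v 1 (4 * k - 1 - 2 * s), v 2 (12 * k - (10 * s + 2 + a)),
        v 2 (12 * k - (10 * s + 2 + a) + 1)}"
    if "a \<in> {8 * (k - s)..<12 * (k - s) - 2}" for a
    using that assms edge[of a] by auto
qed

lemma E4_ring_edges:
  assumes "1 \<le> s" "s < k"
  shows "E4 k s = {ring_edge k s a | a. a \<in> {12 * (k - s) - 2..<16 * (k - s) - 4}}"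
  unfolding E4_def
proof (rule setcompr_reindex[where h = "\<lambda>j. 16 * k - (14 * s + 4 + j)"
      and h' = "\<lambda>a. 16 * k - (14 * s + 4 + a)"])
  have edge: "ring_edge k s a =
      {v 1 (16 * k - (14 * s + 4 + a)), v 1 (16 * k - (14 * s + 4 + a) + 1), v 2 (2 * s + 1)}"
    if "12 * (k - s) - 2 \<le> a" "a < 16 * (k - s) - 4" for a
  proof -
    have "16 * k - (14 * s + 3 + a) = 16 * k - (14 * s + 4 + a) + 1"
      "16 * k - (14 * s + 3 + (a + 1)) = 16 * k - (14 * s + 4 + a)"
      using that assms by arith+
    then show ?thesis
      using that assms ring_cell_leg4[of s k a] ring_cell_leg4[of s k "a + 1"]
      by (simp add: ring_edge_def square_edge_def v_def insert_commute)
  qed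
  show "16 * k - (14 * s + 4 + j) \<in> {12 * (k - s) - 2..<16 * (k - s) - 4} \<and>
      {v 1 j, v 1 (j + 1), v 2 (2 * s + 1)} = ring_edge k s (16 * k - (14 * s + 4 + j))"
    if "j \<in> {2 * s + 1..4 * k - 2 - 2 * s}" for j
  proof -
    have "16 * k - (14 * s + 4 + j) \<in> {12 * (k - s) - 2..<16 * (k - s) - 4}"
      "16 * k - (14 * s + 4 + (16 * k - (14 * s + 4 + j))) = j"
      using that assms by auto
    then show ?thesis using edge by simp
  qed
  show "16 * k - (14 * s + 4 + a) \<in> {2 * s + 1..4 * k - 2 - 2 * s} \<and> ring_edge k s a =
      {v 1 (16 * k - (14 * s + 4 + a)), v 1 (16 * k - (14 * s + 4 + a) + 1), v 2 (2 * s + 1)}"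
    if "a \<in> {12 * (k - s) - 2..<16 * (k - s) - 4}" for a
    using that assms edge[of a] by auto
qed

lemma ring_edges:
  assumes "1 \<le> s" "s < k"
  shows "E1 k s \<union> E2 k s \<union> E3 k s \<union> E4 k s = {ring_edge k s a | a. a < ring_length k s}"
proof -
  have "{0..<ring_length k s} = {0..<4 * (k - s)} \<union> {4 * (k - s)..<8 * (k - s)}
      \<union> {8 * (k - s)..<12 * (k - s) - 2} \<union> {12 * (k - s) - 2..<16 * (k - s) - 4}"
    using assms unfolding ring_length_def by auto
  then show ?thesis
    unfolding E1_ring_edges[OF assms] E2_ring_edges[OF assms] E3_ring_edges[OF assms]
      E4_ring_edges[OF assms]
    by (auto simp del: atLeastLessThan_iff) (auto simp: set_eq_iff)
qed

lemma EE_eq_path_edges: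
  assumes k: "2 \<le> k"
  shows "EE k = path_edges (spiral_cell k) (T1 k)"
proof
  show "EE k \<subseteq> path_edges (spiral_cell k) (T1 k)"
  proof
    fix x assume "x \<in> EE k"
    then obtain s where s: "1 \<le> s" "s < k" and "x \<in> E1 k s \<union> E2 k s \<union> E3 k s \<union> E4 k s"
      unfolding EE_def by auto
    then obtain a where a: "a < ring_length k s" and x: "x = ring_edge k s a"
      unfolding ring_edges[OF s] by blast
    define m where "m = psum k (s - 1) + a"
    have "psum k s \<le> T1 k" unfolding T1_def using s by (intro psum_mono) simp
    then have "m < T1 k" using psum_pred[of s k] s a unfolding m_def by simp
    moreover have "spiral_cell k m = ring_cell k s a"
      using spiral_cell_ring[OF s(1,2), of a] a unfolding m_def by simp
    moreover have "spiral_cell k (m + 1) = ring_cell k s (a + 1)"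
      using spiral_cell_ring[OF s(1,2), of "a + 1"] a unfolding m_def by simp
    ultimately show "x \<in> path_edges (spiral_cell k) (T1 k)"
      unfolding path_edges_def x ring_edge_def by (intro CollectI exI[of _ m]) simp
  qed
next
  show "path_edges (spiral_cell k) (T1 k) \<subseteq> EE k"
  proof
    fix x assume "x \<in> path_edges (spiral_cell k) (T1 k)"
    then obtain m where "m < T1 k"
      and x: "x = square_edge (spiral_cell k m) (spiral_cell k (m + 1))"
      unfolding path_edges_def by blast
    then obtain s a where s: "1 \<le> s" "s < k" and "a < ring_length k s"
        "spiral_cell k m = ring_cell k s a" "spiral_cell k (m + 1) = ring_cell k s (a + 1)"
      using spiral_step_position[OF k] by metis
    then have "x \<in> E1 k s \<union> E2 k s \<union> E3 k s \<union> E4 k s"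
      unfolding ring_edges[OF s] x ring_edge_def by (intro CollectI exI[of _ a]) simp
    then show "x \<in> EE k" unfolding EE_def using s by auto
  qed
qed

lemma eseq_eq_cell_edge:
  assumes "2 \<le> k" "m \<le> T1 k"
  shows "eseq k m = cell_edge (spiral_cell k m)"
proof (cases "m = 0")
  case True
  then show ?thesis by (simp add: eseq_def spiral_cell_def cell_edge_def v_def)
next
  case False
  then obtain s where s: "1 \<le> s" "s \<le> k - 1" "psum k (s - 1) < m" "m \<le> psum k s"
    using ring_index_exists[of m k "k - 1"] assms unfolding T1_def by auto
  then have "sidx k m = s" by (intro sidx_eqI) auto
  with s(3) False show ?thesis
    unfolding eseq_def spiral_cell_def ring_cell_def cell_edge_def Let_def
    by (auto simp: v_def)
qed

lemma VH_eq_grid_vertices: "VH k = grid_vertices (4 * k - 3)"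
  unfolding VH_def A1_def A2_def grid_vertices_def v_def by auto

lemma FF_eq_fan_edges: "FF k = fan_edges (4 * k - 3)"
proof -
  have "j \<in> {1..4 * k - 4} \<longleftrightarrow> 1 \<le> j \<and> j < 4 * k - 3" for j by auto
  then show ?thesis unfolding FF_def fan_edges_def v_def by blast
qed

theorem lemma3p2:
  fixes k :: nat
  assumes "k \<ge> 2"
  shows "sequential (VH k) (H1 k) (eseq k) (T1 k)"
proof -
  interpret induced_grid_path "4 * k - 3" "spiral_cell k" "T1 k"
    using assms by (rule spiral_induced_grid_path)
  have "H1 k = graph {spiral_cell k 0}"
    unfolding H1_def graph_def EE_eq_path_edges[OF assms] FF_eq_fan_edges
      eseq_eq_cell_edge[OF assms le0] by simp
  then show ?thesis
    using graph_sequential[OF T1_pos[OF assms] eseq_eq_cell_edge[OF assms]]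
    by (simp add: VH_eq_grid_vertices)
qed

end
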